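(* Assume Condition (T) (see context) and let $(\mathbf W_t)_{t\in\mathbb Z}$ be the stationary solution of $\mathbf W_t=\mathbf A_t\mathbf W_{t-1}+\mathbf B_t$. For any $\ell\le d$ and $s\in\mathbb N$, let $Q_F(s)=\sum_{n=0}^{s-1}\Pi^{(\ell)}_nD_{\ell,-n}$. Then $Q_F(s)=Q_W(s)+Q_B(s)$ a.s., where $$Q_W(s)=\sum_{j:\,\ell\vartriangleleft j}\pi_{\ell j}(s)W_{j,-s},\qquad Q_B(s)=\sum_{n=0}^{s-1}\Pi^{(\ell)}_n\Big(B_{\ell,-n}+\sum_{j:\,\ell\vartriangleleft j}\ \sum_{m=1}^{s-n-1}\pi'_{\ell j}(-n,-n-m+1)B_{j,-n-m}\Big).$$ Moreover $\mathbb E\,Q_B(s)^{\widetilde\alpha_\ell}<\infty$.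
   Context: $(\mathbf A_t,\mathbf B_t)_{t\in\mathbb Z}$ is an i.i.d. sequence of copies of $(\mathbf A,\mathbf B)$, a random $d\times d$ matrix and random vector in $\mathbb R^d$, entries $A_{ij,t}$, $B_{i,t}$. Condition (T): (T-1) $\mathbf A\ge 0$, $\mathbf B\ge 0$ entrywise a.s.; (T-2) $\mathbb P(B_i=0)<1$; (T-3) $\mathbb P(A_{ij}=0)=1$ whenever $i>j$; (T-4) there exist $\alpha_1,\dots,\alpha_d>0$, pairwise distinct, with $\mathbb E A_{ii}^{\alpha_i}=1$; (T-5) $\mathbb E A_{ij}^{\alpha_i}<\infty$; (T-6) $\mathbb E B_i^{\alpha_i}<\infty$; (T-7) $\mathbb E[A_{ii}^{\alpha_i}\log^+A_{ii}]<\infty$; (T-8) the law of $\log A_{ii}$ given $\{A_{ii}>0\}$ is non-arithmetic. Under (T) the stationary solution $\mathbf W_t=(W_{1,t},\dots,W_{d,t})$ exists and is unique. Relations: $i\preccurlyeq j$ if $\mathbb P(A_{ij}>0)>0$; $i\prec j$ if $i\preccurlyeq j$, $i\ne j$; $i\trianglelefteq j$ if there is a chain $i=i(0)\preccurlyeq i(1)\preccurlyeq\dots\preccurlyeq i(m)=j$ ($m\ge 0$); $i\vartriangleleft j$ if $i\trianglelefteq j$ and $i\neq j$; $\widetilde\alpha_i=\min\{\alpha_j:i\trianglelefteq j\}$. Notation: $\Pi^{(\ell)}_n=A_{\ell\ell,0}\cdots A_{\ell\ell,-n+1}$, $\Pi^{(\ell)}_0=1$; $D_{\ell,t}=\sum_{j:\ell\prec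 j}A_{\ell j,t}W_{j,t-1}+B_{\ell,t}$. For $m\ge1$ let $H_m(i,j)$ be the set of sequences $(h(0),\dots,h(m))$ with $h(0)=i$, $h(m)=j$, $h(k)\preccurlyeq h(k+1)$ for all $k$, and $H'_m(i,j)=\{h\in H_m(i,j): h(1)\neq i\}$. Set $\pi_{ij}(s)=\sum_{h\in H_s(i,j)}\prod_{p=0}^{s-1}A_{h(p)h(p+1),-p}$ (the $(i,j)$ entry of $\mathbf A_0\mathbf A_{-1}\cdots\mathbf A_{-s+1}$) and $\pi'_{\ell j}(-n,-n-m+1)=\sum_{h\in H'_m(\ell,j)}\prod_{p=0}^{m-1}A_{h(p)h(p+1),-n-p}$. *)

theory Defs
  imports "HOL-Probability.Probability"
begin

text \<open>Conventions: time index t :: int, omega :: 'a, coordinates i, j :: nat in {1..d}.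
  A t omega i j is the (i,j) entry of A_t, B t omega i the i-th entry of B_t,
  W t omega i the i-th entry of W_t.  The generic copy (A,B) is (A_0,B_0).\<close>

definition idx :: "nat \<Rightarrow> ((nat \<times> nat) + nat) set" where
  "idx d = Inl ` ({1..d} \<times> {1..d}) \<union> Inr ` {1..d}"

definition ABvec :: "nat \<Rightarrow> (int \<Rightarrow> 'a \<Rightarrow> nat \<Rightarrow> nat \<Rightarrow> real) \<Rightarrow> (int \<Rightarrow> 'a \<Rightarrow> nat \<Rightarrow> real)
     \<Rightarrow> int \<Rightarrow> 'a \<Rightarrow> ((nat \<times> nat) + nat) \<Rightarrow> real" where
  "ABvec d A B t \<omega> = restrict (\<lambda>k. case k of Inl (i, j) \<Rightarrow> A t \<omega> i j | Inr i \<Rightarrow> B t \<omega> i) (idx d)"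

definition iid_AB :: "'a measure \<Rightarrow> nat \<Rightarrow> (int \<Rightarrow> 'a \<Rightarrow> nat \<Rightarrow> nat \<Rightarrow> real) \<Rightarrow> (int \<Rightarrow> 'a \<Rightarrow> nat \<Rightarrow> real) \<Rightarrow> bool" where
  "iid_AB M d A B \<longleftrightarrow>
     prob_space.indep_vars M (\<lambda>_. PiM (idx d) (\<lambda>_. borel)) (ABvec d A B) UNIV \<and>
     (\<forall>t. distr M (PiM (idx d) (\<lambda>_. borel)) (ABvec d A B t) = distr M (PiM (idx d) (\<lambda>_. borel)) (ABvec d A B 0))"

definition stationary_proc :: "'a measure \<Rightarrow> nat \<Rightarrow> (int \<Rightarrow> 'a \<Rightarrow> nat \<Rightarrow> real) \<Rightarrow> bool" where
  "stationary_proc M d W \<longleftrightarrow>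
     (\<forall>T :: int set. finite T \<longrightarrow> (\<forall>h :: int.
        distr M (PiM (T \<times> {1..d}) (\<lambda>_. borel)) (\<lambda>\<omega>. \<lambda>(t, i)\<in>T \<times> {1..d}. W (t + h) \<omega> i)
      = distr M (PiM (T \<times> {1..d}) (\<lambda>_. borel)) (\<lambda>\<omega>. \<lambda>(t, i)\<in>T \<times> {1..d}. W t \<omega> i)))"

definition nonarithmetic_log :: "'a measure \<Rightarrow> ('a \<Rightarrow> real) \<Rightarrow> bool" where
  "nonarithmetic_log M X \<longleftrightarrow>
     \<not> (\<exists>h>0. AE \<omega> in M. X \<omega> > 0 \<longrightarrow> ln (X \<omega>) \<in> range (\<lambda>k::int. h * of_int k))"

definition condT :: "'a measure \<Rightarrow> nat \<Rightarrow> (int \<Rightarrow> 'a \<Rightarrow> nat \<Rightarrow> nat \<Rightarrow> real) \<Rightarrow> (int \<Rightarrow> 'a \<Rightarrow> nat \<Rightarrow> real)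
     \<Rightarrow> (nat \<Rightarrow> real) \<Rightarrow> bool" where
  "condT M d A B \<alpha> \<longleftrightarrow>
     (AE \<omega> in M. \<forall>i\<in>{1..d}. B 0 \<omega> i \<ge> 0 \<and> (\<forall>j\<in>{1..d}. A 0 \<omega> i j \<ge> 0)) \<and>
     (\<forall>i\<in>{1..d}. measure M {\<omega>\<in>space M. B 0 \<omega> i = 0} < 1) \<and>
     (\<forall>i\<in>{1..d}. \<forall>j\<in>{1..d}. i > j \<longrightarrow> measure M {\<omega>\<in>space M. A 0 \<omega> i j = 0} = 1) \<and>
     (\<forall>i\<in>{1..d}. \<alpha> i > 0) \<and> inj_on \<alpha> {1..d} \<and>
     (\<forall>i\<in>{1..d}. (\<integral>\<^sup>+ \<omega>. ennreal (A 0 \<omega> i i powr \<alpha> i) \<partial>M) = 1) \<and>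
     (\<forall>i\<in>{1..d}. \<forall>j\<in>{1..d}. (\<integral>\<^sup>+ \<omega>. ennreal (A 0 \<omega> i j powr \<alpha> i) \<partial>M) < \<infinity>) \<and>
     (\<forall>i\<in>{1..d}. (\<integral>\<^sup>+ \<omega>. ennreal (B 0 \<omega> i powr \<alpha> i) \<partial>M) < \<infinity>) \<and>
     (\<forall>i\<in>{1..d}. (\<integral>\<^sup>+ \<omega>. ennreal (A 0 \<omega> i i powr \<alpha> i * max 0 (ln (A 0 \<omega> i i))) \<partial>M) < \<infinity>) \<and>
     (\<forall>i\<in>{1..d}. nonarithmetic_log M (\<lambda>\<omega>. A 0 \<omega> i i))"

definition prec :: "'a measure \<Rightarrow> (int \<Rightarrow> 'a \<Rightarrow> nat \<Rightarrow> nat \<Rightarrow> real) \<Rightarrow> nat \<Rightarrow> nat \<Rightarrow> bool" where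
  "prec M A i j \<longleftrightarrow> measure M {\<omega>\<in>space M. A 0 \<omega> i j > 0} > 0"

definition trile :: "'a measure \<Rightarrow> nat \<Rightarrow> (int \<Rightarrow> 'a \<Rightarrow> nat \<Rightarrow> nat \<Rightarrow> real) \<Rightarrow> nat \<Rightarrow> nat \<Rightarrow> bool" where
  "trile M d A = (\<lambda>i j. i \<in> {1..d} \<and> j \<in> {1..d} \<and> prec M A i j)\<^sup>*\<^sup>*"

definition trilt :: "'a measure \<Rightarrow> nat \<Rightarrow> (int \<Rightarrow> 'a \<Rightarrow> nat \<Rightarrow> nat \<Rightarrow> real) \<Rightarrow> nat \<Rightarrow> nat \<Rightarrow> bool" where
  "trilt M d A i j \<longleftrightarrow> trile M d A i j \<and> i \<noteq> j"

definition alpha_tilde :: "'a measure \<Rightarrow> nat \<Rightarrow> (int \<Rightarrow> 'a \<Rightarrow> nat \<Rightarrow> nat \<Rightarrow> real) \<Rightarrow> (nat \<Rightarrow> real) \<Rightarrow> nat \<Rightarrow> real" where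
  "alpha_tilde M d A \<alpha> i = Min (\<alpha> ` {j\<in>{1..d}. trile M d A i j})"

definition Pil :: "(int \<Rightarrow> 'a \<Rightarrow> nat \<Rightarrow> nat \<Rightarrow> real) \<Rightarrow> nat \<Rightarrow> nat \<Rightarrow> 'a \<Rightarrow> real" where
  "Pil A l n \<omega> = (\<Prod>k<n. A (- int k) \<omega> l l)"

definition Dl :: "'a measure \<Rightarrow> nat \<Rightarrow> (int \<Rightarrow> 'a \<Rightarrow> nat \<Rightarrow> nat \<Rightarrow> real) \<Rightarrow> (int \<Rightarrow> 'a \<Rightarrow> nat \<Rightarrow> real)
     \<Rightarrow> (int \<Rightarrow> 'a \<Rightarrow> nat \<Rightarrow> real) \<Rightarrow> nat \<Rightarrow> int \<Rightarrow> 'a \<Rightarrow> real" where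
  "Dl M d A B W l t \<omega> =
     (\<Sum>j\<in>{j\<in>{1..d}. prec M A l j \<and> l \<noteq> j}. A t \<omega> l j * W (t - 1) \<omega> j) + B t \<omega> l"

definition Hpaths :: "'a measure \<Rightarrow> nat \<Rightarrow> (int \<Rightarrow> 'a \<Rightarrow> nat \<Rightarrow> nat \<Rightarrow> real) \<Rightarrow> nat \<Rightarrow> nat \<Rightarrow> nat \<Rightarrow> (nat \<Rightarrow> nat) set" where
  "Hpaths M d A m i j = {h \<in> {0..m} \<rightarrow>\<^sub>E {1..d}. h 0 = i \<and> h m = j \<and> (\<forall>k<m. prec M A (h k) (h (Suc k)))}"

definition Hpaths' :: "'a measure \<Rightarrow> nat \<Rightarrow> (int \<Rightarrow> 'a \<Rightarrow> nat \<Rightarrow> nat \<Rightarrow> real) \<Rightarrow> nat \<Rightarrow> nat \<Rightarrow> nat \<Rightarrow> (nat \<Rightarrow> nat) set" where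
  "Hpaths' M d A m i j = {h \<in> Hpaths M d A m i j. h 1 \<noteq> i}"

definition pis :: "'a measure \<Rightarrow> nat \<Rightarrow> (int \<Rightarrow> 'a \<Rightarrow> nat \<Rightarrow> nat \<Rightarrow> real) \<Rightarrow> nat \<Rightarrow> nat \<Rightarrow> nat \<Rightarrow> 'a \<Rightarrow> real" where
  "pis M d A i j s \<omega> = (\<Sum>h\<in>Hpaths M d A s i j. \<Prod>p<s. A (- int p) \<omega> (h p) (h (Suc p)))"

text \<open>pis' M d A i j n m = \<pi>'_{ij}(-n, -n-m+1)\<close>
definition pis' :: "'a measure \<Rightarrow> nat \<Rightarrow> (int \<Rightarrow> 'a \<Rightarrow> nat \<Rightarrow> nat \<Rightarrow> real) \<Rightarrow> nat \<Rightarrow> nat \<Rightarrow> nat \<Rightarrow> nat \<Rightarrow> 'a \<Rightarrow> real" where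
  "pis' M d A i j n m \<omega> = (\<Sum>h\<in>Hpaths' M d A m i j. \<Prod>p<m. A (- int n - int p) \<omega> (h p) (h (Suc p)))"

definition QF where
  "QF M d A B W l s \<omega> = (\<Sum>n<s. Pil A l n \<omega> * Dl M d A B W l (- int n) \<omega>)"

definition QW where
  "QW M d A W l s \<omega> = (\<Sum>j\<in>{j\<in>{1..d}. trilt M d A l j}. pis M d A l j s \<omega> * W (- int s) \<omega> j)"

definition QB where
  "QB M d A B l s \<omega> = (\<Sum>n<s. Pil A l n \<omega> *
      (B (- int n) \<omega> l + (\<Sum>j\<in>{j\<in>{1..d}. trilt M d A l j}. \<Sum>m\<in>{1..s - n - 1}.
          pis' M d A l j n m \<omega> * B (- int n - int m) \<omega> j)))"

end

theory Submission
  imports Defs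
begin

(* Both identities come from unrolling W_t = A_t W_{t-1} + B_t from time 0 back to time -s in two
   ways, on the almost sure event where every entry A_{ij,t} with not (i \<preccurlyeq> j) vanishes.
   Along row l, upper triangularity gives W_{l,0} = \<Pi>_s W_{l,-s} + Q_F(s).  Unrolling the whole
   vector gives W_{l,0} = sum_j \<pi>_{lj}(s) W_{j,-s} + sum_{n<s} sum_j \<pi>_{lj}(n) B_{j,-n}: the
   term j = l of the first sum is \<Pi>_s W_{l,-s} and the others form Q_W(s); splitting each path
   from l to j \<noteq> l at the step where it leaves l turns the second sum into Q_B(s).
   Q_B(s) is a finite sum of monomials, each a product of entries of (A_t, B_t) at distinct times
   whose rows are reachable from l; by independence every monomial has a finite moment of order
   \<alpha>~_l, and so has a finite sum of nonnegative such variables. *)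

section \<open>Path sums\<close>

(* A_t with the entries outside \<preccurlyeq> deleted: path sums follow the matrix recursion of these
   matrices, which agree with A_t almost surely. *)
definition Aprec :: "'a measure \<Rightarrow> (int \<Rightarrow> 'a \<Rightarrow> nat \<Rightarrow> nat \<Rightarrow> real) \<Rightarrow> int \<Rightarrow> 'a \<Rightarrow> nat \<Rightarrow> nat \<Rightarrow> real"
  where "Aprec M A t \<omega> i k = (if prec M A i k then A t \<omega> i k else 0)"

definition path_sum :: "'a measure \<Rightarrow> nat \<Rightarrow> (int \<Rightarrow> 'a \<Rightarrow> nat \<Rightarrow> nat \<Rightarrow> real)
    \<Rightarrow> int \<Rightarrow> nat \<Rightarrow> nat \<Rightarrow> nat \<Rightarrow> 'a \<Rightarrow> real"
  where "path_sum M d A \<tau> m i j \<omega> =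
    (\<Sum>h\<in>Hpaths M d A m i j. \<Prod>p<m. A (\<tau> - int p) \<omega> (h p) (h (Suc p)))"

lemma pis_eq_path_sum: "pis M d A i j s \<omega> = path_sum M d A 0 s i j \<omega>"
  by (simp add: pis_def path_sum_def)

definition path_cons :: "nat \<Rightarrow> nat \<Rightarrow> (nat \<Rightarrow> nat) \<Rightarrow> nat \<Rightarrow> nat"
  where "path_cons m i g = (\<lambda>p\<in>{0..Suc m}. if p = 0 then i else g (p - 1))"

lemma finite_Hpaths: "finite (Hpaths M d A m i j)"
proof (rule finite_subset)
  show "Hpaths M d A m i j \<subseteq> {0..m} \<rightarrow>\<^sub>E {1..d}" by (auto simp: Hpaths_def)
qed (intro finite_PiE, auto)

lemma trile_Hpaths:
  assumes h: "h \<in> Hpaths M d A m i j" and "p \<le> m"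
  shows "trile M d A i (h p)"
  using \<open>p \<le> m\<close>
proof (induction p)
  case 0
  then show ?case using h by (simp add: Hpaths_def trile_def)
next
  case (Suc p)
  have "h p \<in> {1..d}" "h (Suc p) \<in> {1..d}" "prec M A (h p) (h (Suc p))"
    using h Suc.prems by (auto simp: Hpaths_def)
  with Suc show ?case unfolding trile_def by (simp add: rtranclp.rtrancl_into_rtrancl)
qed

lemma trile_if_path_sum_nonzero:
  assumes "path_sum M d A \<tau> m i j \<omega> \<noteq> 0"
  shows "trile M d A i j"
proof -
  obtain h where "h \<in> Hpaths M d A m i j"
    using assms by (auto simp: path_sum_def elim: sum.not_neutral_contains_not_neutral)
  then show ?thesis using trile_Hpaths[of h M d A m i j m] by (simp add: Hpaths_def)
qed

lemma Hpaths_Suc_eq_path_cons: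
  assumes "i \<in> {1..d}"
  shows "{h\<in>Hpaths M d A (Suc m) i j. Q (h 1)} =
     path_cons m i ` (\<Union>k\<in>{k\<in>{1..d}. prec M A i k \<and> Q k}. Hpaths M d A m k j)"
proof (intro equalityI subsetI)
  fix h assume h: "h \<in> {h\<in>Hpaths M d A (Suc m) i j. Q (h 1)}"
  define g where "g = (\<lambda>p\<in>{0..m}. h (Suc p))"
  have hE: "h \<in> {0..Suc m} \<rightarrow>\<^sub>E {1..d}" and h0: "h 0 = i"
    and hp: "\<forall>k<Suc m. prec M A (h k) (h (Suc k))"
    using h by (auto simp: Hpaths_def)
  have "g \<in> Hpaths M d A m (h 1) j"
    using h unfolding Hpaths_def g_def by auto
  moreover have "h 1 \<in> {1..d}" "prec M A i (h 1)" "Q (h 1)"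
    using h hE hp h0 by auto
  moreover have "h = path_cons m i g"
  proof
    fix p show "h p = path_cons m i g p"
      using hE h0 by (cases p) (auto simp: path_cons_def g_def PiE_def extensional_def)
  qed
  ultimately show "h \<in> path_cons m i ` (\<Union>k\<in>{k\<in>{1..d}. prec M A i k \<and> Q k}. Hpaths M d A m k j)"
    by blast
next
  fix h assume "h \<in> path_cons m i ` (\<Union>k\<in>{k\<in>{1..d}. prec M A i k \<and> Q k}. Hpaths M d A m k j)"
  then obtain k g where k: "k \<in> {1..d}" "prec M A i k" "Q k" and g: "g \<in> Hpaths M d A m k j"
    and hg: "h = path_cons m i g" by auto
  have "\<forall>q<Suc m. prec M A (h q) (h (Suc q))"
  proof (intro allI impI)
    fix q assume "q < Suc m"
    then show "prec M A (h q) (h (Suc q))"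
      using g k unfolding hg path_cons_def Hpaths_def by (cases q) auto
  qed
  then show "h \<in> {h\<in>Hpaths M d A (Suc m) i j. Q (h 1)}"
    using g k assms unfolding Hpaths_def hg path_cons_def by auto
qed

lemma inj_on_path_cons: "inj_on (path_cons m i) (\<Union>k\<in>K. Hpaths M d A m k j)"
proof (rule inj_onI)
  fix g1 g2 assume "g1 \<in> (\<Union>k\<in>K. Hpaths M d A m k j)" "g2 \<in> (\<Union>k\<in>K. Hpaths M d A m k j)"
    and eq: "path_cons m i g1 = path_cons m i g2"
  then have "g1 \<in> extensional {0..m}" "g2 \<in> extensional {0..m}"
    by (auto simp: Hpaths_def PiE_def)
  then show "g1 = g2"
  proof (rule extensionalityI)
    fix p assume "p \<in> {0..m}"
    then show "g1 p = g2 p" using fun_cong[OF eq, of "Suc p"] by (simp add: path_cons_def)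
  qed
qed

lemma sum_Hpaths_Suc_first_step:
  assumes "i \<in> {1..d}"
  shows "(\<Sum>h\<in>{h\<in>Hpaths M d A (Suc m) i j. Q (h 1)}. \<Prod>p<Suc m. A (\<tau> - int p) \<omega> (h p) (h (Suc p)))
    = (\<Sum>k\<in>{k\<in>{1..d}. Q k}. Aprec M A \<tau> \<omega> i k * path_sum M d A (\<tau> - 1) m k j \<omega>)"
proof -
  let ?K = "{k\<in>{1..d}. prec M A i k \<and> Q k}"
  let ?f = "\<lambda>h. \<Prod>p<Suc m. A (\<tau> - int p) \<omega> (h p) (h (Suc p))"
  have cons: "?f (path_cons m i g) = A \<tau> \<omega> i k * (\<Prod>p<m. A (\<tau> - 1 - int p) \<omega> (g p) (g (Suc p)))"
    if "g \<in> Hpaths M d A m k j" for g k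
    using that by (simp add: prod.lessThan_Suc_shift path_cons_def Hpaths_def algebra_simps
        del: prod.lessThan_Suc)
  have "(\<Sum>h\<in>{h\<in>Hpaths M d A (Suc m) i j. Q (h 1)}. ?f h)
      = (\<Sum>g\<in>(\<Union>k\<in>?K. Hpaths M d A m k j). ?f (path_cons m i g))"
    unfolding Hpaths_Suc_eq_path_cons[OF assms] by (simp add: sum.reindex[OF inj_on_path_cons])
  also have "\<dots> = (\<Sum>k\<in>?K. \<Sum>g\<in>Hpaths M d A m k j. ?f (path_cons m i g))"
  proof (rule sum.UNION_disjoint)
    show "\<forall>k\<in>?K. \<forall>k'\<in>?K. k \<noteq> k' \<longrightarrow> Hpaths M d A m k j \<inter> Hpaths M d A m k' j = {}"
      by (auto simp: Hpaths_def)
  qed (simp_all add: finite_Hpaths)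
  also have "\<dots> = (\<Sum>k\<in>?K. A \<tau> \<omega> i k * path_sum M d A (\<tau> - 1) m k j \<omega>)"
    by (simp add: cons path_sum_def sum_distrib_left del: prod.lessThan_Suc)
  also have "\<dots> = (\<Sum>k\<in>{k\<in>{1..d}. Q k}. Aprec M A \<tau> \<omega> i k * path_sum M d A (\<tau> - 1) m k j \<omega>)"
    by (rule sum.mono_neutral_cong_left) (auto simp: Aprec_def)
  finally show ?thesis .
qed

lemma path_sum_0:
  assumes "i \<in> {1..d}"
  shows "path_sum M d A \<tau> 0 i j \<omega> = (if i = j then 1 else 0)"
proof -
  have "Hpaths M d A 0 i j = (if i = j then {\<lambda>p\<in>{0..0}. i} else {})"
    using assms by (auto simp: Hpaths_def PiE_def extensional_def fun_eq_iff)
  then show ?thesis by (simp add: path_sum_def)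
qed

lemma sum_path_sum_0:
  assumes "i \<in> {1..d}"
  shows "(\<Sum>j\<in>{1..d}. path_sum M d A \<tau> 0 i j \<omega> * g j) = g i"
proof -
  have "path_sum M d A \<tau> 0 i j \<omega> * g j = (if i = j then g j else 0)" for j
    using assms by (simp add: path_sum_0)
  then show ?thesis using assms by simp
qed

lemma path_sum_Suc:
  assumes "i \<in> {1..d}"
  shows "path_sum M d A \<tau> (Suc m) i j \<omega> =
    (\<Sum>k\<in>{1..d}. Aprec M A \<tau> \<omega> i k * path_sum M d A (\<tau> - 1) m k j \<omega>)"
  using sum_Hpaths_Suc_first_step[OF assms, where Q = "\<lambda>_. True"]
  unfolding path_sum_def by (simp only: simp_thms Collect_mem_eq)

lemma pis'_Suc:
  assumes "i \<in> {1..d}"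
  shows "pis' M d A i j n (Suc m) \<omega> =
    (\<Sum>k\<in>{k\<in>{1..d}. k \<noteq> i}. Aprec M A (- int n) \<omega> i k * path_sum M d A (- int n - 1) m k j \<omega>)"
  using sum_Hpaths_Suc_first_step[OF assms, where Q = "\<lambda>k. k \<noteq> i"]
  by (simp add: pis'_def Hpaths'_def)

section \<open>Unrolling the recursion\<close>

lemma minus_int_diff_1: "- int n - 1 = - int (Suc n)"
  by simp

lemma minus_int_diff_Suc: "- int n - int (Suc p) = - int (Suc n) - int p"
  by simp

lemma diff_int_Suc: "\<tau> - int (Suc p) = \<tau> - 1 - int p"
  by simp

lemma sum_lessThan_triangle:
  fixes f :: "nat \<Rightarrow> nat \<Rightarrow> 'b::comm_monoid_add"
  shows "(\<Sum>n<s. \<Sum>q<n. f q n) = (\<Sum>q<s. \<Sum>m\<in>{1..s - q - 1}. f q (q + m))"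
proof (induction s)
  case (Suc s)
  have "(\<Sum>m\<in>{1..Suc s - q - 1}. f q (q + m)) = f q s + (\<Sum>m\<in>{1..s - q - 1}. f q (q + m))"
    if "q < s" for q
  proof -
    obtain k where "s = Suc (q + k)" using \<open>q < s\<close> less_imp_Suc_add by blast
    then show ?thesis by (simp add: add.commute)
  qed
  then show ?case using Suc by (simp add: sum.distrib add.commute)
qed simp

lemma trile_imp_le:
  assumes upper: "\<And>i j. i \<in> {1..d} \<Longrightarrow> j \<in> {1..d} \<Longrightarrow> prec M A i j \<Longrightarrow> i \<le> j"
    and "trile M d A i j"
  shows "i \<le> j"
  using \<open>trile M d A i j\<close> unfolding trile_def
proof (induction rule: rtranclp_induct)
  case (step y z)
  then show ?case using upper[of y z] by simp
qed simp

context
  fixes M :: "'a measure" and d :: nat and A :: "int \<Rightarrow> 'a \<Rightarrow> nat \<Rightarrow> nat \<Rightarrow> real" and \<omega> :: 'a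
  assumes A_vanish: "\<And>t i j. i \<in> {1..d} \<Longrightarrow> j \<in> {1..d} \<Longrightarrow> \<not> prec M A i j \<Longrightarrow> A t \<omega> i j = 0"
begin

lemma Aprec_eq: "i \<in> {1..d} \<Longrightarrow> j \<in> {1..d} \<Longrightarrow> Aprec M A t \<omega> i j = A t \<omega> i j"
  using A_vanish by (simp add: Aprec_def)

lemma path_sum_Suc':
  assumes "i \<in> {1..d}"
  shows "path_sum M d A \<tau> (Suc m) i j \<omega> =
    (\<Sum>k\<in>{1..d}. A \<tau> \<omega> i k * path_sum M d A (\<tau> - 1) m k j \<omega>)"
  using assms by (simp add: path_sum_Suc Aprec_eq)

lemma path_sum_offdiag:
  assumes l: "l \<in> {1..d}" and "j \<noteq> l"
  shows "path_sum M d A (- int n) s l j \<omega> =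
    (\<Sum>q<s. (\<Prod>p<q. A (- int n - int p) \<omega> l l) * pis' M d A l j (n + q) (s - q) \<omega>)"
proof (induction s arbitrary: n)
  case 0
  then show ?case using assms by (simp add: path_sum_0)
next
  case (Suc s)
  have "path_sum M d A (- int n) (Suc s) l j \<omega>
      = A (- int n) \<omega> l l * path_sum M d A (- int n - 1) s l j \<omega> + pis' M d A l j n (Suc s) \<omega>"
    unfolding path_sum_Suc[OF l] pis'_Suc[OF l] sum.remove[OF finite_atLeastAtMost l]
    using l by (simp add: Aprec_eq set_diff_eq)
  also have "path_sum M d A (- int n - 1) s l j \<omega> =
      (\<Sum>q<s. (\<Prod>p<q. A (- int (Suc n) - int p) \<omega> l l) * pis' M d A l j (Suc n + q) (s - q) \<omega>)"
    unfolding minus_int_diff_1 by (rule Suc.IH)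
  also have "A (- int n) \<omega> l l * \<dots> + pis' M d A l j n (Suc s) \<omega> =
      (\<Sum>q<Suc s. (\<Prod>p<q. A (- int n - int p) \<omega> l l) * pis' M d A l j (n + q) (Suc s - q) \<omega>)"
  proof -
    have "(\<Prod>p<Suc q. A (- int n - int p) \<omega> l l) = A (- int n) \<omega> l l * (\<Prod>p<q. A (- int (Suc n) - int p) \<omega> l l)" for q
      by (simp only: prod.lessThan_Suc_shift minus_int_diff_Suc of_nat_0 diff_zero)
    then show ?thesis
      by (simp add: sum.lessThan_Suc_shift sum_distrib_left mult.assoc del: sum.lessThan_Suc prod.lessThan_Suc)
  qed
  finally show ?case .
qed

context
  assumes upper: "\<And>i j. i \<in> {1..d} \<Longrightarrow> j \<in> {1..d} \<Longrightarrow> prec M A i j \<Longrightarrow> i \<le> j"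
begin

lemma path_sum_diag:
  assumes l: "l \<in> {1..d}"
  shows "path_sum M d A \<tau> m l l \<omega> = (\<Prod>p<m. A (\<tau> - int p) \<omega> l l)"
proof (induction m arbitrary: \<tau>)
  case 0
  show ?case using l by (simp add: path_sum_0)
next
  case (Suc m)
  have off: "A \<tau> \<omega> l k * path_sum M d A (\<tau> - 1) m k l \<omega> = 0" if k: "k \<in> {1..d} - {l}" for k
  proof (cases "prec M A l k")
    case True
    then have "l \<le> k" using upper[OF l _ True] k by simp
    with k have "l < k" by simp
    have "path_sum M d A (\<tau> - 1) m k l \<omega> = 0"
    proof (rule ccontr)
      assume "path_sum M d A (\<tau> - 1) m k l \<omega> \<noteq> 0"
      from trile_imp_le[OF upper trile_if_path_sum_nonzero[OF this]] have "k \<le> l" .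
      with \<open>l < k\<close> show False by simp
    qed
    then show ?thesis by simp
  next
    case False
    then show ?thesis using A_vanish l k by simp
  qed
  have "path_sum M d A \<tau> (Suc m) l l \<omega> = A \<tau> \<omega> l l * path_sum M d A (\<tau> - 1) m l l \<omega>"
    unfolding path_sum_Suc'[OF l] sum.remove[OF finite_atLeastAtMost l] using off by (simp add: sum.neutral)
  then show ?case
    by (simp only: Suc.IH prod.lessThan_Suc_shift diff_int_Suc of_nat_0 diff_zero)
qed

lemma sum_path_sum_split:
  assumes l: "l \<in> {1..d}"
  shows "(\<Sum>j\<in>{1..d}. path_sum M d A 0 n l j \<omega> * g j)
    = Pil A l n \<omega> * g l + (\<Sum>j\<in>{j\<in>{1..d}. trilt M d A l j}. path_sum M d A 0 n l j \<omega> * g j)"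
proof -
  let ?T = "{j\<in>{1..d}. trilt M d A l j}"
  have "(\<Sum>j\<in>{1..d}. path_sum M d A 0 n l j \<omega> * g j) = (\<Sum>j\<in>insert l ?T. path_sum M d A 0 n l j \<omega> * g j)"
  proof (rule sum.mono_neutral_right)
    show "\<forall>j\<in>{1..d} - insert l ?T. path_sum M d A 0 n l j \<omega> * g j = 0"
      using trile_if_path_sum_nonzero by (force simp: trilt_def)
  qed (use l in auto)
  also have "\<dots> = path_sum M d A 0 n l l \<omega> * g l + (\<Sum>j\<in>?T. path_sum M d A 0 n l j \<omega> * g j)"
    by (simp add: trilt_def)
  also have "path_sum M d A 0 n l l \<omega> = Pil A l n \<omega>"
    using path_sum_diag[OF l, of 0 n] by (simp add: Pil_def)
  finally show ?thesis .
qed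

lemma sum_path_sum_B_eq_QB:
  assumes l: "l \<in> {1..d}"
  shows "(\<Sum>n<s. \<Sum>j\<in>{1..d}. path_sum M d A 0 n l j \<omega> * B (- int n) \<omega> j) = QB M d A B l s \<omega>"
proof -
  let ?T = "{j\<in>{1..d}. trilt M d A l j}"
  let ?R = "\<lambda>q j. \<Sum>m\<in>{1..s - q - 1}. pis' M d A l j q m \<omega> * B (- int q - int m) \<omega> j"
  have column: "(\<Sum>n<s. path_sum M d A 0 n l j \<omega> * B (- int n) \<omega> j) = (\<Sum>q<s. Pil A l q \<omega> * ?R q j)"
    if "j \<in> ?T" for j
  proof -
    have "(\<Sum>n<s. path_sum M d A 0 n l j \<omega> * B (- int n) \<omega> j)
        = (\<Sum>n<s. \<Sum>q<n. Pil A l q \<omega> * pis' M d A l j q (n - q) \<omega> * B (- int n) \<omega> j)"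
      using path_sum_offdiag[OF l, of j 0] that by (simp add: Pil_def trilt_def sum_distrib_right)
    also have "\<dots> = (\<Sum>q<s. \<Sum>m\<in>{1..s - q - 1}. Pil A l q \<omega> * pis' M d A l j q (q + m - q) \<omega> * B (- int (q + m)) \<omega> j)"
      by (rule sum_lessThan_triangle)
    also have "\<dots> = (\<Sum>q<s. Pil A l q \<omega> * ?R q j)"
      by (simp add: sum_distrib_left mult.assoc)
    finally show ?thesis .
  qed
  have "(\<Sum>n<s. \<Sum>j\<in>{1..d}. path_sum M d A 0 n l j \<omega> * B (- int n) \<omega> j)
      = (\<Sum>n<s. Pil A l n \<omega> * B (- int n) \<omega> l) + (\<Sum>j\<in>?T. \<Sum>n<s. path_sum M d A 0 n l j \<omega> * B (- int n) \<omega> j)"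
    by (simp only: sum_path_sum_split[OF l] sum.distrib sum.swap[of _ "{..<s}"])
  also have "(\<Sum>j\<in>?T. \<Sum>n<s. path_sum M d A 0 n l j \<omega> * B (- int n) \<omega> j) = (\<Sum>q<s. Pil A l q \<omega> * (\<Sum>j\<in>?T. ?R q j))"
    by (simp only: column cong: sum.cong) (simp add: sum_distrib_left, rule sum.swap)
  finally show ?thesis
    by (simp add: QB_def distrib_left sum.distrib)
qed

end

context
  fixes W :: "int \<Rightarrow> 'a \<Rightarrow> nat \<Rightarrow> real" and B :: "int \<Rightarrow> 'a \<Rightarrow> nat \<Rightarrow> real"
  assumes rec: "\<And>t i. i \<in> {1..d} \<Longrightarrow> W t \<omega> i = (\<Sum>j\<in>{1..d}. A t \<omega> i j * W (t - 1) \<omega> j) + B t \<omega> i"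
begin

lemma W_row_step:
  assumes l: "l \<in> {1..d}"
  shows "W t \<omega> l = A t \<omega> l l * W (t - 1) \<omega> l + Dl M d A B W l t \<omega>"
proof -
  have "(\<Sum>j\<in>{1..d}. A t \<omega> l j * W (t - 1) \<omega> j)
      = A t \<omega> l l * W (t - 1) \<omega> l + (\<Sum>j\<in>{1..d} - {l}. A t \<omega> l j * W (t - 1) \<omega> j)"
    by (rule sum.remove[OF finite_atLeastAtMost l])
  also have "(\<Sum>j\<in>{1..d} - {l}. A t \<omega> l j * W (t - 1) \<omega> j)
      = (\<Sum>j\<in>{j\<in>{1..d}. prec M A l j \<and> l \<noteq> j}. A t \<omega> l j * W (t - 1) \<omega> j)"
  proof (intro sum.mono_neutral_right)
    show "\<forall>j\<in>{1..d} - {l} - {j\<in>{1..d}. prec M A l j \<and> l \<noteq> j}. A t \<omega> l j * W (t - 1) \<omega> j = 0"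
      using l by (auto intro: A_vanish)
  qed auto
  finally show ?thesis using rec[OF l] by (simp add: Dl_def)
qed

lemma W_row_telescope:
  assumes l: "l \<in> {1..d}"
  shows "W 0 \<omega> l = Pil A l s \<omega> * W (- int s) \<omega> l + QF M d A B W l s \<omega>"
proof (induction s)
  case 0
  then show ?case by (simp add: Pil_def QF_def)
next
  case (Suc s)
  have "W (- int s) \<omega> l = A (- int s) \<omega> l l * W (- int (Suc s)) \<omega> l + Dl M d A B W l (- int s) \<omega>"
    using W_row_step[OF l, of "- int s"] unfolding minus_int_diff_1 .
  then show ?case using Suc by (simp add: Pil_def QF_def algebra_simps)
qed

lemma W_path_expansion:
  assumes "i \<in> {1..d}"
  shows "W \<tau> \<omega> i = (\<Sum>j\<in>{1..d}. path_sum M d A \<tau> s i j \<omega> * W (\<tau> - int s) \<omega> j)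
      + (\<Sum>n<s. \<Sum>j\<in>{1..d}. path_sum M d A \<tau> n i j \<omega> * B (\<tau> - int n) \<omega> j)"
  using \<open>i \<in> {1..d}\<close>
proof (induction s arbitrary: \<tau> i)
  case 0
  then show ?case by (simp only: sum_path_sum_0 of_nat_0 diff_zero) simp
next
  case (Suc s)
  let ?P = "path_sum M d A"
  have first_step: "(\<Sum>k\<in>{1..d}. A \<tau> \<omega> i k * (\<Sum>j\<in>{1..d}. ?P (\<tau> - 1) n k j \<omega> * g j))
      = (\<Sum>j\<in>{1..d}. ?P \<tau> (Suc n) i j \<omega> * g j)" for n g
    unfolding path_sum_Suc'[OF Suc.prems] sum_distrib_left sum_distrib_right
    by (subst sum.swap) (simp add: mult.assoc)
  have swap_outer: "(\<Sum>k\<in>{1..d}. A \<tau> \<omega> i k * (\<Sum>n<s. F n k)) = (\<Sum>n<s. \<Sum>k\<in>{1..d}. A \<tau> \<omega> i k * F n k)"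
    for F :: "nat \<Rightarrow> nat \<Rightarrow> real"
    by (simp add: sum_distrib_left) (rule sum.swap)
  have "W \<tau> \<omega> i = (\<Sum>k\<in>{1..d}. A \<tau> \<omega> i k * W (\<tau> - 1) \<omega> k) + B \<tau> \<omega> i"
    using rec[OF Suc.prems] .
  also have "(\<Sum>k\<in>{1..d}. A \<tau> \<omega> i k * W (\<tau> - 1) \<omega> k)
      = (\<Sum>k\<in>{1..d}. A \<tau> \<omega> i k * ((\<Sum>j\<in>{1..d}. ?P (\<tau> - 1) s k j \<omega> * W (\<tau> - int (Suc s)) \<omega> j)
          + (\<Sum>n<s. \<Sum>j\<in>{1..d}. ?P (\<tau> - 1) n k j \<omega> * B (\<tau> - int (Suc n)) \<omega> j)))"
    by (intro sum.cong refl) (simp only: Suc.IH diff_int_Suc[symmetric])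
  also have "\<dots> = (\<Sum>k\<in>{1..d}. A \<tau> \<omega> i k * (\<Sum>j\<in>{1..d}. ?P (\<tau> - 1) s k j \<omega> * W (\<tau> - int (Suc s)) \<omega> j))
      + (\<Sum>n<s. \<Sum>k\<in>{1..d}. A \<tau> \<omega> i k * (\<Sum>j\<in>{1..d}. ?P (\<tau> - 1) n k j \<omega> * B (\<tau> - int (Suc n)) \<omega> j))"
    by (simp only: distrib_left sum.distrib swap_outer)
  also have "\<dots> = (\<Sum>j\<in>{1..d}. ?P \<tau> (Suc s) i j \<omega> * W (\<tau> - int (Suc s)) \<omega> j)
      + (\<Sum>n<s. \<Sum>j\<in>{1..d}. ?P \<tau> (Suc n) i j \<omega> * B (\<tau> - int (Suc n)) \<omega> j)"
    by (simp only: first_step)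
  also have "\<dots> + B \<tau> \<omega> i = (\<Sum>j\<in>{1..d}. ?P \<tau> (Suc s) i j \<omega> * W (\<tau> - int (Suc s)) \<omega> j)
      + (\<Sum>n<Suc s. \<Sum>j\<in>{1..d}. ?P \<tau> n i j \<omega> * B (\<tau> - int n) \<omega> j)"
    using Suc.prems by (simp only: sum.lessThan_Suc_shift sum_path_sum_0 of_nat_0 diff_zero)
  finally show ?case .
qed

lemma QF_eq_QW_plus_QB:
  assumes upper: "\<And>i j. i \<in> {1..d} \<Longrightarrow> j \<in> {1..d} \<Longrightarrow> prec M A i j \<Longrightarrow> i \<le> j"
    and l: "l \<in> {1..d}"
  shows "QF M d A B W l s \<omega> = QW M d A W l s \<omega> + QB M d A B l s \<omega>"
proof -
  have "W 0 \<omega> l = Pil A l s \<omega> * W (- int s) \<omega> l + QF M d A B W l s \<omega>"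
    by (rule W_row_telescope[OF l])
  moreover have "W 0 \<omega> l = (\<Sum>j\<in>{1..d}. path_sum M d A 0 s l j \<omega> * W (- int s) \<omega> j)
      + (\<Sum>n<s. \<Sum>j\<in>{1..d}. path_sum M d A 0 n l j \<omega> * B (- int n) \<omega> j)"
    using W_path_expansion[OF l, of 0 s] by simp
  moreover have "(\<Sum>j\<in>{1..d}. path_sum M d A 0 s l j \<omega> * W (- int s) \<omega> j)
      = Pil A l s \<omega> * W (- int s) \<omega> l + QW M d A W l s \<omega>"
    by (simp only: sum_path_sum_split[OF upper l] QW_def pis_eq_path_sum)
  moreover have "(\<Sum>n<s. \<Sum>j\<in>{1..d}. path_sum M d A 0 n l j \<omega> * B (- int n) \<omega> j) = QB M d A B l s \<omega>"
    by (rule sum_path_sum_B_eq_QB[OF upper l])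
  ultimately show ?thesis by linarith
qed

end

end

section \<open>Finite moments\<close>

definition finite_moment :: "'a measure \<Rightarrow> real \<Rightarrow> ('a \<Rightarrow> real) \<Rightarrow> bool" where
  "finite_moment M a f \<longleftrightarrow>
     f \<in> borel_measurable M \<and> (AE \<omega> in M. 0 \<le> f \<omega>) \<and> (\<integral>\<^sup>+\<omega>. ennreal (f \<omega> powr a) \<partial>M) < \<infinity>"

lemma powr_add_le_2_powr:
  fixes x y a :: real
  assumes "0 \<le> x" "0 \<le> y" "0 < a"
  shows "(x + y) powr a \<le> 2 powr a * (x powr a + y powr a)"
proof -
  have "(x + y) powr a \<le> (2 * max x y) powr a"
    using assms by (intro powr_mono2) auto
  also have "\<dots> = 2 powr a * max x y powr a"
    using assms by (simp add: powr_mult)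
  also have "max x y powr a \<le> x powr a + y powr a"
    by (cases "x \<le> y") (auto simp: max_def)
  then have "2 powr a * max x y powr a \<le> 2 powr a * (x powr a + y powr a)"
    by (intro mult_left_mono) auto
  finally show ?thesis .
qed

lemma powr_le_1_plus_powr:
  fixes x a b :: real
  assumes "0 \<le> x" "0 < a" "a \<le> b"
  shows "x powr a \<le> 1 + x powr b"
proof (cases "x \<le> 1")
  case True
  then have "x powr a \<le> 1"
    using assms powr_mono2[of a x 1] by simp
  then show ?thesis using powr_ge_zero[of x b] by linarith
next
  case False
  then have "x powr a \<le> x powr b"
    using assms by (intro powr_mono) auto
  then show ?thesis by simp
qed

lemma finite_moment_add:
  assumes a: "0 < a" and f: "finite_moment M a f" and g: "finite_moment M a g"
  shows "finite_moment M a (\<lambda>\<omega>. f \<omega> + g \<omega>)"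
proof -
  have [measurable]: "f \<in> borel_measurable M" "g \<in> borel_measurable M"
    and nonneg: "AE \<omega> in M. 0 \<le> f \<omega>" "AE \<omega> in M. 0 \<le> g \<omega>"
    using f g by (auto simp: finite_moment_def)
  have "(\<integral>\<^sup>+\<omega>. ennreal ((f \<omega> + g \<omega>) powr a) \<partial>M)
      \<le> (\<integral>\<^sup>+\<omega>. ennreal (2 powr a) * (ennreal (f \<omega> powr a) + ennreal (g \<omega> powr a)) \<partial>M)"
    using nonneg
  proof (intro nn_integral_mono_AE, eventually_elim)
    case (elim \<omega>)
    then have "ennreal ((f \<omega> + g \<omega>) powr a) \<le> ennreal (2 powr a * (f \<omega> powr a + g \<omega> powr a))"
      by (intro ennreal_leI powr_add_le_2_powr a)
    then show ?case by (simp add: ennreal_mult ennreal_plus)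
  qed
  also have "\<dots> = ennreal (2 powr a) * ((\<integral>\<^sup>+\<omega>. ennreal (f \<omega> powr a) \<partial>M) + (\<integral>\<^sup>+\<omega>. ennreal (g \<omega> powr a) \<partial>M))"
    by (simp add: nn_integral_cmult nn_integral_add)
  also have "\<dots> < \<infinity>"
    using f g by (simp add: finite_moment_def ennreal_mult_less_top)
  finally show ?thesis
    using nonneg by (auto simp: finite_moment_def)
qed

lemma finite_moment_sum:
  assumes "0 < a" and "\<And>k. k \<in> K \<Longrightarrow> finite_moment M a (f k)"
  shows "finite_moment M a (\<lambda>\<omega>. \<Sum>k\<in>K. f k \<omega>)"
  using assms(2)
proof (induction K rule: infinite_finite_induct)
  case (insert k K)
  have "finite_moment M a (\<lambda>\<omega>. f k \<omega> + (\<Sum>k\<in>K. f k \<omega>))"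
    using insert by (intro finite_moment_add[OF \<open>0 < a\<close>]) simp_all
  then show ?case
    using insert.hyps by simp
qed (simp_all add: finite_moment_def)

lemma finite_moment_mono_exponent:
  assumes "prob_space M" and "0 < a" "a \<le> b" and f: "finite_moment M b f"
  shows "finite_moment M a f"
proof -
  interpret prob_space M by fact
  have [measurable]: "f \<in> borel_measurable M" and nonneg: "AE \<omega> in M. 0 \<le> f \<omega>"
    using f by (auto simp: finite_moment_def)
  have "(\<integral>\<^sup>+\<omega>. ennreal (f \<omega> powr a) \<partial>M) \<le> (\<integral>\<^sup>+\<omega>. 1 + ennreal (f \<omega> powr b) \<partial>M)"
    using nonneg
  proof (intro nn_integral_mono_AE, eventually_elim)
    case (elim \<omega>)
    then have "ennreal (f \<omega> powr a) \<le> ennreal (1 + f \<omega> powr b)"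
      using assms by (intro ennreal_leI powr_le_1_plus_powr)
    then show ?case by (simp add: ennreal_plus)
  qed
  also have "\<dots> = 1 + (\<integral>\<^sup>+\<omega>. ennreal (f \<omega> powr b) \<partial>M)"
    by (simp add: nn_integral_add emeasure_space_1)
  also have "\<dots> < \<infinity>"
    using f by (simp add: finite_moment_def)
  finally show ?thesis
    using nonneg by (simp add: finite_moment_def)
qed

lemma finite_moment_prod_indep:
  assumes "prob_space M" and S: "finite S"
    and indep: "prob_space.indep_vars M (\<lambda>_. borel) X S"
    and X: "\<And>\<tau>. \<tau> \<in> S \<Longrightarrow> finite_moment M a (X \<tau>)"
  shows "finite_moment M a (\<lambda>\<omega>. \<Prod>\<tau>\<in>S. X \<tau> \<omega>)"
proof -
  interpret prob_space M by fact
  have [measurable]: "X \<tau> \<in> borel_measurable M" if "\<tau> \<in> S" for \<tau>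
    using X[OF that] by (simp add: finite_moment_def)
  have "AE \<omega> in M. \<forall>\<tau>\<in>S. 0 \<le> X \<tau> \<omega>"
    using X by (intro AE_finite_allI[OF S]) (simp add: finite_moment_def)
  then have nonneg: "AE \<omega> in M. 0 \<le> (\<Prod>\<tau>\<in>S. X \<tau> \<omega>)"
    by eventually_elim (simp add: prod_nonneg)
  have "(\<integral>\<^sup>+\<omega>. ennreal ((\<Prod>\<tau>\<in>S. X \<tau> \<omega>) powr a) \<partial>M) = (\<integral>\<^sup>+\<omega>. (\<Prod>\<tau>\<in>S. ennreal (X \<tau> \<omega> powr a)) \<partial>M)"
    by (simp add: prod_powr_distrib prod_ennreal)
  also have "\<dots> = (\<Prod>\<tau>\<in>S. \<integral>\<^sup>+\<omega>. ennreal (X \<tau> \<omega> powr a) \<partial>M)"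
    by (intro indep_vars_nn_integral S indep_vars_compose2[OF indep]) auto
  also have "\<dots> < \<infinity>"
  proof -
    have "\<forall>\<tau>\<in>S. (\<integral>\<^sup>+\<omega>. ennreal (X \<tau> \<omega> powr a) \<partial>M) < \<infinity>"
      using X by (simp add: finite_moment_def)
    then have "(\<Prod>\<tau>\<in>S. \<integral>\<^sup>+\<omega>. ennreal (X \<tau> \<omega> powr a) \<partial>M) \<noteq> top"
      by (subst ennreal_prod_eq_top) auto
    then show ?thesis
      by (simp add: less_top)
  qed
  finally show ?thesis
    using nonneg by (simp add: finite_moment_def borel_measurable_prod)
qed

section \<open>Moments of the monomials of Q_B\<close>

abbreviation AB_space :: "nat \<Rightarrow> ((nat \<times> nat) + nat \<Rightarrow> real) measure" where
  "AB_space d \<equiv> PiM (idx d) (\<lambda>_. borel)"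

lemma Inl_in_idx_iff [simp]: "Inl (i, j) \<in> idx d \<longleftrightarrow> i \<in> {1..d} \<and> j \<in> {1..d}"
  by (auto simp: idx_def)

lemma Inr_in_idx_iff [simp]: "Inr i \<in> idx d \<longleftrightarrow> i \<in> {1..d}"
  by (auto simp: idx_def)

lemma ABvec_Inl: "i \<in> {1..d} \<Longrightarrow> j \<in> {1..d} \<Longrightarrow> ABvec d A B t \<omega> (Inl (i, j)) = A t \<omega> i j"
  by (simp add: ABvec_def)

lemma ABvec_Inr: "i \<in> {1..d} \<Longrightarrow> ABvec d A B t \<omega> (Inr i) = B t \<omega> i"
  by (simp add: ABvec_def)

lemma prod_lessThan_add:
  fixes F :: "nat \<Rightarrow> 'b::comm_monoid_mult"
  shows "(\<Prod>t<n + m. F t) = (\<Prod>t<n. F t) * (\<Prod>p<m. F (n + p))"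
  by (induction m) (simp_all add: mult.assoc)

lemma alpha_tilde_le:
  assumes "i \<in> {1..d}" "trile M d A l i"
  shows "alpha_tilde M d A \<alpha> l \<le> \<alpha> i"
  unfolding alpha_tilde_def using assms by (intro Min_le) auto

lemma alpha_tilde_pos:
  assumes "condT M d A B \<alpha>" and "l \<in> {1..d}"
  shows "0 < alpha_tilde M d A \<alpha> l"
proof -
  have "alpha_tilde M d A \<alpha> l \<in> \<alpha> ` {j\<in>{1..d}. trile M d A l j}"
    unfolding alpha_tilde_def using assms(2) by (intro Min_in) (auto simp: trile_def)
  then show ?thesis
    using assms(1) by (auto simp: condT_def)
qed

definition QB_monomial :: "(int \<Rightarrow> 'a \<Rightarrow> nat \<Rightarrow> nat \<Rightarrow> real) \<Rightarrow> (int \<Rightarrow> 'a \<Rightarrow> nat \<Rightarrow> real)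
    \<Rightarrow> nat \<Rightarrow> nat \<Rightarrow> nat \<Rightarrow> (nat \<Rightarrow> nat) \<Rightarrow> nat \<Rightarrow> 'a \<Rightarrow> real" where
  "QB_monomial A B l n m h j \<omega> =
     Pil A l n \<omega> * (\<Prod>p<m. A (- int n - int p) \<omega> (h p) (h (Suc p))) * B (- int n - int m) \<omega> j"

lemma QB_eq_sum_QB_monomial:
  "QB M d A B l s \<omega> = (\<Sum>n<s. QB_monomial A B l n 0 (\<lambda>_. l) l \<omega>
      + (\<Sum>j\<in>{j\<in>{1..d}. trilt M d A l j}. \<Sum>m\<in>{1..s - n - 1}. \<Sum>h\<in>Hpaths' M d A m l j.
          QB_monomial A B l n m h j \<omega>))"
  unfolding QB_def pis'_def QB_monomial_def
  by (simp add: distrib_left sum_distrib_left sum_distrib_right mult.assoc)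

context
  fixes M :: "'a measure" and d :: nat
    and A :: "int \<Rightarrow> 'a \<Rightarrow> nat \<Rightarrow> nat \<Rightarrow> real" and B :: "int \<Rightarrow> 'a \<Rightarrow> nat \<Rightarrow> real"
  assumes prob: "prob_space M" and iid: "iid_AB M d A B"
begin

interpretation prob_space M
  by (rule prob)

lemma indep_ABvec: "indep_vars (\<lambda>_. AB_space d) (ABvec d A B) UNIV"
  using iid by (simp add: iid_AB_def)

lemma measurable_ABvec [measurable]: "ABvec d A B t \<in> measurable M (AB_space d)"
  using indep_ABvec by (auto simp: indep_vars_def)

lemma borel_measurable_ABvec_coord [measurable]:
  "k \<in> idx d \<Longrightarrow> (\<lambda>\<omega>. ABvec d A B t \<omega> k) \<in> borel_measurable M"
  by measurable

lemma borel_measurable_A: "i \<in> {1..d} \<Longrightarrow> j \<in> {1..d} \<Longrightarrow> (\<lambda>\<omega>. A t \<omega> i j) \<in> borel_measurable M"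
  using borel_measurable_ABvec_coord[of "Inl (i, j)" t] by (simp add: ABvec_Inl)

lemma distr_ABvec_eq: "distr M (AB_space d) (ABvec d A B t) = distr M (AB_space d) (ABvec d A B 0)"
  using iid by (simp add: iid_AB_def)

lemma AE_ABvec_shift:
  assumes "{x \<in> space (AB_space d). P x} \<in> sets (AB_space d)"
  shows "(AE \<omega> in M. P (ABvec d A B t \<omega>)) \<longleftrightarrow> (AE \<omega> in M. P (ABvec d A B 0 \<omega>))"
proof -
  have "(AE \<omega> in M. P (ABvec d A B t \<omega>)) \<longleftrightarrow> (AE x in distr M (AB_space d) (ABvec d A B t). P x)"
    by (rule AE_distr_iff[OF measurable_ABvec assms, symmetric])
  also have "\<dots> \<longleftrightarrow> (AE \<omega> in M. P (ABvec d A B 0 \<omega>))"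
    unfolding distr_ABvec_eq[of t] by (rule AE_distr_iff[OF measurable_ABvec assms])
  finally show ?thesis .
qed

lemma nn_integral_ABvec_shift:
  assumes "g \<in> borel_measurable (AB_space d)"
  shows "(\<integral>\<^sup>+\<omega>. g (ABvec d A B t \<omega>) \<partial>M) = (\<integral>\<^sup>+\<omega>. g (ABvec d A B 0 \<omega>) \<partial>M)"
proof -
  have "(\<integral>\<^sup>+\<omega>. g (ABvec d A B t \<omega>) \<partial>M) = integral\<^sup>N (distr M (AB_space d) (ABvec d A B t)) g"
    using assms by (simp add: nn_integral_distr)
  also have "\<dots> = (\<integral>\<^sup>+\<omega>. g (ABvec d A B 0 \<omega>) \<partial>M)"
    unfolding distr_ABvec_eq[of t] using assms by (simp add: nn_integral_distr)
  finally show ?thesis .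
qed

lemma finite_moment_ABvec_shift:
  assumes "k \<in> idx d" and "finite_moment M a (\<lambda>\<omega>. ABvec d A B 0 \<omega> k)"
  shows "finite_moment M a (\<lambda>\<omega>. ABvec d A B t \<omega> k)"
proof -
  have "(AE \<omega> in M. 0 \<le> ABvec d A B t \<omega> k) \<longleftrightarrow> (AE \<omega> in M. 0 \<le> ABvec d A B 0 \<omega> k)"
    using assms by (intro AE_ABvec_shift) measurable
  moreover have "(\<integral>\<^sup>+\<omega>. ennreal (ABvec d A B t \<omega> k powr a) \<partial>M) = (\<integral>\<^sup>+\<omega>. ennreal (ABvec d A B 0 \<omega> k powr a) \<partial>M)"
    using assms by (intro nn_integral_ABvec_shift[where g = "\<lambda>x. ennreal (x k powr a)"]) measurable
  ultimately show ?thesis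
    using assms by (simp add: finite_moment_def)
qed

lemma finite_moment_prod_ABvec:
  assumes "\<And>t. t < N \<Longrightarrow> \<kappa> t \<in> idx d"
    and "\<And>t. t < N \<Longrightarrow> finite_moment M a (\<lambda>\<omega>. ABvec d A B 0 \<omega> (\<kappa> t))"
  shows "finite_moment M a (\<lambda>\<omega>. \<Prod>t<N. ABvec d A B (- int t) \<omega> (\<kappa> t))"
proof -
  let ?S = "(\<lambda>t. - int t) ` {..<N}" and ?\<kappa> = "\<lambda>\<tau>. \<kappa> (nat (- \<tau>))"
  have "indep_vars (\<lambda>_. borel) (\<lambda>\<tau> \<omega>. ABvec d A B \<tau> \<omega> (?\<kappa> \<tau>)) ?S"
    using assms(1) by (intro indep_vars_compose2[OF indep_vars_subset[OF indep_ABvec]]) auto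
  moreover have "finite_moment M a (\<lambda>\<omega>. ABvec d A B \<tau> \<omega> (?\<kappa> \<tau>))" if "\<tau> \<in> ?S" for \<tau>
  proof -
    from that obtain t where t: "t < N" and \<tau>: "\<tau> = - int t"
      by auto
    show ?thesis
      unfolding \<tau> using finite_moment_ABvec_shift[OF assms(1)[OF t] assms(2)[OF t]] by simp
  qed
  ultimately have "finite_moment M a (\<lambda>\<omega>. \<Prod>\<tau>\<in>?S. ABvec d A B \<tau> \<omega> (?\<kappa> \<tau>))"
    by (intro finite_moment_prod_indep[OF prob]) auto
  moreover have "inj_on (\<lambda>t. - int t) {..<N}"
    by (auto simp: inj_on_def)
  ultimately show ?thesis
    by (simp add: prod.reindex)
qed

context
  fixes \<alpha> :: "nat \<Rightarrow> real"
  assumes cT: "condT M d A B \<alpha>"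
begin

lemma AE_ABvec_nonneg:
  assumes "k \<in> idx d"
  shows "AE \<omega> in M. 0 \<le> ABvec d A B t \<omega> k"
proof -
  have "AE \<omega> in M. \<forall>i\<in>{1..d}. B 0 \<omega> i \<ge> 0 \<and> (\<forall>j\<in>{1..d}. A 0 \<omega> i j \<ge> 0)"
    using cT by (simp add: condT_def)
  then have "AE \<omega> in M. 0 \<le> ABvec d A B 0 \<omega> k"
    by eventually_elim (use assms in \<open>auto simp: idx_def ABvec_Inl ABvec_Inr\<close>)
  moreover have "{x \<in> space (AB_space d). 0 \<le> x k} \<in> sets (AB_space d)"
    using assms by measurable
  ultimately show ?thesis
    using AE_ABvec_shift[of "\<lambda>x. 0 \<le> x k" t] by simp
qed

lemma prec_imp_le:
  assumes ij: "i \<in> {1..d}" "j \<in> {1..d}" and "prec M A i j"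
  shows "i \<le> j"
proof (rule ccontr)
  let ?Z = "{\<omega>\<in>space M. A 0 \<omega> i j = 0}"
  assume "\<not> i \<le> j"
  then have "prob ?Z = 1"
    using cT ij by (simp add: condT_def)
  have Z: "?Z \<in> sets M"
    using borel_measurable_A[OF ij] by measurable
  have "prob {\<omega>\<in>space M. A 0 \<omega> i j > 0} \<le> prob (space M - ?Z)"
    using Z by (intro finite_measure_mono) auto
  also have "\<dots> = 0"
    using prob_compl[OF Z] \<open>prob ?Z = 1\<close> by simp
  finally show False
    using \<open>prec M A i j\<close> by (simp add: prec_def)
qed

lemma AE_A_eq_0_if_not_prec:
  assumes ij: "i \<in> {1..d}" "j \<in> {1..d}" and "\<not> prec M A i j"
  shows "AE \<omega> in M. A t \<omega> i j = 0"
proof -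
  have "prob {\<omega>\<in>space M. A 0 \<omega> i j > 0} = 0"
    using \<open>\<not> prec M A i j\<close> measure_nonneg[of M "{\<omega>\<in>space M. A 0 \<omega> i j > 0}"]
    by (simp add: prec_def)
  moreover have "{\<omega>\<in>space M. A 0 \<omega> i j > 0} \<in> sets M"
    using borel_measurable_A[OF ij] by measurable
  ultimately have "{\<omega>\<in>space M. A 0 \<omega> i j > 0} \<in> null_sets M"
    by (simp add: null_sets_def emeasure_eq_measure)
  then have "AE \<omega> in M. \<not> A 0 \<omega> i j > 0"
    by (rule AE_I') auto
  moreover have "AE \<omega> in M. 0 \<le> ABvec d A B 0 \<omega> (Inl (i, j))"
    using ij by (intro AE_ABvec_nonneg) simp
  ultimately have "AE \<omega> in M. ABvec d A B 0 \<omega> (Inl (i, j)) = 0"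
    by eventually_elim (use ij in \<open>simp add: ABvec_Inl\<close>)
  moreover have "Inl (i, j) \<in> idx d"
    using ij by simp
  then have "{x \<in> space (AB_space d). x (Inl (i, j)) = 0} \<in> sets (AB_space d)"
    by measurable
  ultimately have "AE \<omega> in M. ABvec d A B t \<omega> (Inl (i, j)) = 0"
    using AE_ABvec_shift[of "\<lambda>x. x (Inl (i, j)) = 0" t] by simp
  then show ?thesis
    using ij by (simp add: ABvec_Inl)
qed

lemma finite_moment_ABvec:
  assumes "0 < a" and k: "k \<in> idx d"
    and a: "a \<le> \<alpha> (case k of Inl (i, j) \<Rightarrow> i | Inr i \<Rightarrow> i)"
  shows "finite_moment M a (\<lambda>\<omega>. ABvec d A B t \<omega> k)"
proof -
  let ?i = "case k of Inl (i, j) \<Rightarrow> i | Inr i \<Rightarrow> i"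
  have "(\<integral>\<^sup>+\<omega>. ennreal (ABvec d A B 0 \<omega> k powr \<alpha> ?i) \<partial>M) < \<infinity>"
    using cT k by (auto simp: condT_def idx_def ABvec_Inl ABvec_Inr)
  then have "finite_moment M (\<alpha> ?i) (\<lambda>\<omega>. ABvec d A B 0 \<omega> k)"
    using AE_ABvec_nonneg[OF k] k by (simp add: finite_moment_def)
  then have "finite_moment M a (\<lambda>\<omega>. ABvec d A B 0 \<omega> k)"
    by (rule finite_moment_mono_exponent[OF prob \<open>0 < a\<close> a])
  then show ?thesis
    by (rule finite_moment_ABvec_shift[OF k])
qed

lemma finite_moment_QB_monomial:
  assumes l: "l \<in> {1..d}" and a: "0 < a" "a \<le> \<alpha> l"
    and j: "j \<in> {1..d}" "a \<le> \<alpha> j"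
    and h: "\<And>p. p < m \<Longrightarrow> h p \<in> {1..d} \<and> h (Suc p) \<in> {1..d} \<and> a \<le> \<alpha> (h p)"
  shows "finite_moment M a (QB_monomial A B l n m h j)"
proof -
  \<comment> \<open>the coordinate of (A_{-t}, B_{-t}) that the monomial uses at time -t\<close>
  define \<kappa> where "\<kappa> t = (if t < n then Inl (l, l)
      else if t < n + m then Inl (h (t - n), h (Suc (t - n))) else Inr j)" for t
  have \<kappa>: "\<kappa> t \<in> idx d \<and> a \<le> \<alpha> (case \<kappa> t of Inl (i, k) \<Rightarrow> i | Inr i \<Rightarrow> i)" for t
    using l a j h[of "t - n"] by (simp add: \<kappa>_def)
  have "finite_moment M a (\<lambda>\<omega>. \<Prod>t<Suc (n + m). ABvec d A B (- int t) \<omega> (\<kappa> t))"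
  proof (rule finite_moment_prod_ABvec)
    show "\<kappa> t \<in> idx d" for t
      using \<kappa> by simp
    show "finite_moment M a (\<lambda>\<omega>. ABvec d A B 0 \<omega> (\<kappa> t))" for t
      using \<kappa>[of t] a by (intro finite_moment_ABvec) auto
  qed
  moreover have "(\<Prod>t<Suc (n + m). ABvec d A B (- int t) \<omega> (\<kappa> t)) = QB_monomial A B l n m h j \<omega>" for \<omega>
  proof -
    have time: "- int (n + p) = - int n - int p" for p
      by simp
    have "(\<Prod>t<n. ABvec d A B (- int t) \<omega> (\<kappa> t)) = Pil A l n \<omega>"
      unfolding Pil_def using l by (intro prod.cong) (auto simp: \<kappa>_def ABvec_Inl)
    moreover have "(\<Prod>p<m. ABvec d A B (- int (n + p)) \<omega> (\<kappa> (n + p)))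
        = (\<Prod>p<m. A (- int n - int p) \<omega> (h p) (h (Suc p)))"
      unfolding time using h by (intro prod.cong) (auto simp: \<kappa>_def ABvec_Inl)
    moreover have "ABvec d A B (- int (n + m)) \<omega> (\<kappa> (n + m)) = B (- int n - int m) \<omega> j"
      unfolding time using j by (simp add: \<kappa>_def ABvec_Inr)
    ultimately show ?thesis
      by (simp add: prod_lessThan_add QB_monomial_def)
  qed
  ultimately show ?thesis
    by simp
qed

lemma finite_moment_QB:
  assumes l: "l \<in> {1..d}"
  shows "finite_moment M (alpha_tilde M d A \<alpha> l) (QB M d A B l s)"
proof -
  let ?a = "alpha_tilde M d A \<alpha> l"
  have a: "0 < ?a"
    by (rule alpha_tilde_pos[OF cT l])
  have le: "?a \<le> \<alpha> i" if "i \<in> {1..d}" "trile M d A l i" for i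
    using alpha_tilde_le[OF that] .
  have le_l: "?a \<le> \<alpha> l"
    using le[OF l] by (simp add: trile_def)
  have "finite_moment M ?a (\<lambda>\<omega>. \<Sum>n<s. QB_monomial A B l n 0 (\<lambda>_. l) l \<omega>
      + (\<Sum>j\<in>{j\<in>{1..d}. trilt M d A l j}. \<Sum>m\<in>{1..s - n - 1}. \<Sum>h\<in>Hpaths' M d A m l j.
          QB_monomial A B l n m h j \<omega>))"
  proof (intro finite_moment_sum finite_moment_add a)
    show "finite_moment M ?a (QB_monomial A B l n 0 (\<lambda>_. l) l)" for n
      using l le_l by (intro finite_moment_QB_monomial a) auto
    show "finite_moment M ?a (QB_monomial A B l n m h j)"
      if j: "j \<in> {j\<in>{1..d}. trilt M d A l j}" and h: "h \<in> Hpaths' M d A m l j" for n m h j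
    proof (rule finite_moment_QB_monomial[OF l a le_l])
      show "j \<in> {1..d}" "?a \<le> \<alpha> j"
        using j le by (auto simp: trilt_def)
      fix p assume p: "p < m"
      have hH: "h \<in> Hpaths M d A m l j"
        using h by (simp add: Hpaths'_def)
      then have "h p \<in> {1..d}" "h (Suc p) \<in> {1..d}"
        using p by (auto simp: Hpaths_def)
      moreover have "trile M d A l (h p)"
        using trile_Hpaths[OF hH] p by simp
      ultimately show "h p \<in> {1..d} \<and> h (Suc p) \<in> {1..d} \<and> ?a \<le> \<alpha> (h p)"
        using le by blast
    qed
  qed
  then show ?thesis
    by (simp add: QB_eq_sum_QB_monomial[abs_def])
qed

lemma AE_QF_eq_QW_plus_QB:
  assumes rec: "\<And>t. AE \<omega> in M. \<forall>i\<in>{1..d}. W t \<omega> i = (\<Sum>j\<in>{1..d}. A t \<omega> i j * W (t - 1) \<omega> j) + B t \<omega> i"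
    and l: "l \<in> {1..d}"
  shows "AE \<omega> in M. QF M d A B W l s \<omega> = QW M d A W l s \<omega> + QB M d A B l s \<omega>"
proof -
  have "AE \<omega> in M. i \<in> {1..d} \<longrightarrow> j \<in> {1..d} \<longrightarrow> \<not> prec M A i j \<longrightarrow> A t \<omega> i j = 0" for t i j
    using AE_A_eq_0_if_not_prec[of i j t] by (cases "i \<in> {1..d} \<and> j \<in> {1..d} \<and> \<not> prec M A i j") auto
  then have "AE \<omega> in M. \<forall>t i j. i \<in> {1..d} \<longrightarrow> j \<in> {1..d} \<longrightarrow> \<not> prec M A i j \<longrightarrow> A t \<omega> i j = 0"
    by (simp add: AE_all_countable)
  moreover have "AE \<omega> in M. \<forall>t. \<forall>i\<in>{1..d}. W t \<omega> i = (\<Sum>j\<in>{1..d}. A t \<omega> i j * W (t - 1) \<omega> j) + B t \<omega> i"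
    using rec by (simp add: AE_all_countable)
  ultimately show ?thesis
  proof eventually_elim
    case (elim \<omega>)
    have vanish: "\<And>t i j. i \<in> {1..d} \<Longrightarrow> j \<in> {1..d} \<Longrightarrow> \<not> prec M A i j \<Longrightarrow> A t \<omega> i j = 0"
      using elim(1) by blast
    have rec\<omega>: "\<And>t i. i \<in> {1..d} \<Longrightarrow> W t \<omega> i = (\<Sum>j\<in>{1..d}. A t \<omega> i j * W (t - 1) \<omega> j) + B t \<omega> i"
      using elim(2) by blast
    show ?case
      by (rule QF_eq_QW_plus_QB[where M = M and d = d and A = A and \<omega> = \<omega> and W = W and B = B,
          OF vanish rec\<omega> prec_imp_le l])
  qed
qed

end

end

theorem lemma5p4:
  fixes M :: "'a measure" and d :: nat
    and A :: "int \<Rightarrow> 'a \<Rightarrow> nat \<Rightarrow> nat \<Rightarrow> real" and B :: "int \<Rightarrow> 'a \<Rightarrow> nat \<Rightarrow> real"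
    and W :: "int \<Rightarrow> 'a \<Rightarrow> nat \<Rightarrow> real" and \<alpha> :: "nat \<Rightarrow> real"
    and l s :: nat
  assumes "prob_space M"
    and "iid_AB M d A B"
    and "condT M d A B \<alpha>"
    and "\<And>t i. (\<lambda>\<omega>. W t \<omega> i) \<in> borel_measurable M"
    and "\<And>t. AE \<omega> in M. \<forall>i\<in>{1..d}. W t \<omega> i = (\<Sum>j\<in>{1..d}. A t \<omega> i j * W (t - 1) \<omega> j) + B t \<omega> i"
    and "stationary_proc M d W"
    and "l \<in> {1..d}"
  shows "(AE \<omega> in M. QF M d A B W l s \<omega> = QW M d A W l s \<omega> + QB M d A B l s \<omega>)
    \<and> (\<integral>\<^sup>+ \<omega>. ennreal (QB M d A B l s \<omega> powr alpha_tilde M d A \<alpha> l) \<partial>M) < \<infinity>"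
proof -
  \<comment> \<open>the identity holds pathwise\<close>
  have "AE \<omega> in M. QF M d A B W l s \<omega> = QW M d A W l s \<omega> + QB M d A B l s \<omega>"
    by (rule AE_QF_eq_QW_plus_QB[OF assms(1-3,5,7)])
  moreover have "finite_moment M (alpha_tilde M d A \<alpha> l) (QB M d A B l s)"
    by (rule finite_moment_QB[OF assms(1-3,7)])
  ultimately show ?thesis
    by (simp add: finite_moment_def)
qed

end
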